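(* Let $n>d\ge1$, let $X\in\mathbb{R}^{n\times d}$ with $X^\top X$ invertible, let $\theta^*\in\mathbb{R}^d$ with $\|\theta^*\|_2=1$, $y=X\theta^*$, and $\alpha\in\mathbb{R}\setminus\{0\}$. Let $q^{(0)}=\mathbf{0}_d$, $Z^{(0)}=\begin{bmatrix} X & y\\ q^{(0)\top} & \alpha\end{bmatrix}\in\mathbb{R}^{(n+1)\times(d+1)}$, $Q=I_{d+1}$, $P=\begin{bmatrix} I_{d} & \mathbf{0}_{d\times 1}\\ \mathbf{0}_{1\times d} & 0\end{bmatrix}$, let $T\ge1$ be the number of loops, and use step sizes $\eta^{(t)}=1/L$ for all $t$, where $L=\|X^\top X\|$ (spectral norm). Let $\kappa=\lambda_{\max}(X^\top X)/\lambda_{\min}(X^\top X)$. Then $$|\langle \mathsf{TF}(Z^{(0)};Q,P),\theta^*\rangle-\alpha|\le|\alpha|\cdot\exp\!\Big(-\frac{T}{2\kappa}\Big).$$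
   Context: For $Z\in\mathbb{R}^{(n+1)\times(d+1)}$ and $Q,P\in\mathbb{R}^{(d+1)\times(d+1)}$, the linear attention is $\mathsf{Attn}(Z;Q,P):=(M\circ(ZQZ^\top))ZP$, where $\circ$ is the entrywise (Hadamard) product and $M=\begin{bmatrix}\mathbf{0}_{n\times n} & \mathbf{0}_{n\times 1}\\ \mathbf{1}_{1\times n} & 0\end{bmatrix}\in\mathbb{R}^{(n+1)\times(n+1)}$. The linear looped transformer with loop number $T$ and step sizes $\eta^{(t)}>0$ is defined by $Z^{(t)}:=Z^{(t-1)}-\eta^{(t-1)}\mathsf{Attn}(Z^{(t-1)};Q,P)$ for $t\in\{1,\dots,T\}$, and $\mathsf{TF}(Z^{(0)};Q,P):=-\big(Z^{(T)}_{n+1,1:d}\big)^\top\in\mathbb{R}^d$, i.e. minus the first $d$ entries of the last row of $Z^{(T)}$. $\lambda_{\min},\lambda_{\max}$ denote the smallest and largest eigenvalues. *)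

theory Defs
  imports "Jordan_Normal_Form.Char_Poly"
begin

definition vnorm2 :: "real vec \<Rightarrow> real" where
  "vnorm2 v = sqrt (\<Sum>i<dim_vec v. (v $ i)^2)"

definition spec_norm :: "real mat \<Rightarrow> real" where
  "spec_norm A = Sup {vnorm2 (A *\<^sub>v v) | v. v \<in> carrier_vec (dim_col A) \<and> vnorm2 v = 1}"

definition lambda_max :: "real mat \<Rightarrow> real" where
  "lambda_max A = Max {k. eigenvalue A k}"

definition lambda_min :: "real mat \<Rightarrow> real" where
  "lambda_min A = Min {k. eigenvalue A k}"

definition hadamard :: "real mat \<Rightarrow> real mat \<Rightarrow> real mat" where
  "hadamard A B = mat (dim_row A) (dim_col A) (\<lambda>(i,j). A $$ (i,j) * B $$ (i,j))"

(* mask M in R^{(n+1)x(n+1)} (0-indexed): last row is [1 ... 1 0], rest 0;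
   here N = n+1 is the number of rows of Z *)
definition attn_mask :: "nat \<Rightarrow> real mat" where
  "attn_mask N = mat N N (\<lambda>(i,j). if i = N - 1 \<and> j < N - 1 then 1 else 0)"

definition Attn :: "real mat \<Rightarrow> real mat \<Rightarrow> real mat \<Rightarrow> real mat" where
  "Attn Z Q P = hadamard (attn_mask (dim_row Z)) (Z * Q * Z\<^sup>T) * Z * P"

fun loopZ :: "(nat \<Rightarrow> real) \<Rightarrow> real mat \<Rightarrow> real mat \<Rightarrow> real mat \<Rightarrow> nat \<Rightarrow> real mat" where
  "loopZ eta Q P Z0 0 = Z0"
| "loopZ eta Q P Z0 (Suc t) = loopZ eta Q P Z0 t - eta t \<cdot>\<^sub>m Attn (loopZ eta Q P Z0 t) Q P"

definition TF :: "(nat \<Rightarrow> real) \<Rightarrow> nat \<Rightarrow> real mat \<Rightarrow> real mat \<Rightarrow> real mat \<Rightarrow> real vec" where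
  "TF eta T Q P Z0 = (let ZT = loopZ eta Q P Z0 T in
     vec (dim_col Z0 - 1) (\<lambda>j. - ZT $$ (dim_row Z0 - 1, j)))"

end

theory Submission
  imports Defs "HOL-Analysis.Function_Topology" "Jordan_Normal_Form.Spectral_Radius"
begin

text \<open>
  Along the loop the first n rows of Z never change and the last row stays (q_t, \<alpha>), where one
  loop maps q_t to q_t - \<eta> X^T (X q_t + \<alpha> y): the transformer runs gradient descent on the
  least-squares loss of the prompt. For y = X \<theta>* the error e_t = q_t + \<alpha> \<theta>* satisfies
  e_(t+1) = (I - A / L) e_t with A = X^T X, and since L = \<lambda>_max, the Rayleigh bounds
  \<lambda>_min |v|^2 \<le> v^T A v \<le> \<lambda>_max |v|^2 shrink |e_t|^2 by the factor 1 - 1/\<kappa> in every loop.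
  Hence |\<langle>TF, \<theta>*\<rangle> - \<alpha>| = |\<langle>e_T, \<theta>*\<rangle>| \<le> (1 - 1/\<kappa>)^(T/2) |\<alpha>| \<le> |\<alpha>| exp (-T / (2 \<kappa>)).
  The Rayleigh bounds come from minimising the Rayleigh quotient over the compact unit sphere.
\<close>

section \<open>Positive semidefinite matrices\<close>

lemma scalar_prod_self_nonneg: "0 \<le> (v :: real vec) \<bullet> v"
  using conjugate_square_ge_0_vec[of v] by simp

lemma scalar_prod_self_eq_0_iff:
  "(v :: real vec) \<in> carrier_vec n \<Longrightarrow> v \<bullet> v = 0 \<longleftrightarrow> v = 0\<^sub>v n"
  using conjugate_square_eq_0_vec[of v n] by simp

lemma scalar_prod_diff_smult_self:
  fixes v w :: "real vec"
  assumes "v \<in> carrier_vec n" "w \<in> carrier_vec n"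
  shows "(v - c \<cdot>\<^sub>v w) \<bullet> (v - c \<cdot>\<^sub>v w) = v \<bullet> v - 2 * c * (v \<bullet> w) + c\<^sup>2 * (w \<bullet> w)"
  using assms unfolding scalar_prod_def
  by (auto simp: power2_eq_square algebra_simps sum_distrib_left sum_subtractf sum.distrib)

lemma nonneg_quadratic_discrim_le:
  fixes a b c :: real
  assumes nonneg: "\<And>t. 0 \<le> a + 2 * b * t + c * t\<^sup>2" and "c \<ge> 0"
  shows "b\<^sup>2 \<le> a * c"
proof (cases "c = 0")
  case True
  have "b = 0"
  proof (rule ccontr)
    assume "b \<noteq> 0"
    have "0 \<le> a + 2 * b * (- (\<bar>a\<bar> + 1) / (2 * b))"
      using nonneg[of "- (\<bar>a\<bar> + 1) / (2 * b)"] True by simp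
    also have "\<dots> = a - (\<bar>a\<bar> + 1)" using \<open>b \<noteq> 0\<close> by (simp add: field_simps)
    finally show False by linarith
  qed
  with True show ?thesis by simp
next
  case False
  with \<open>c \<ge> 0\<close> have "c > 0" by simp
  have "0 \<le> a + 2 * b * (- b / c) + c * (- b / c)\<^sup>2" by (rule nonneg)
  also have "\<dots> = a - b\<^sup>2 / c" using \<open>c > 0\<close> by (simp add: field_simps power2_eq_square)
  finally show ?thesis using \<open>c > 0\<close> by (simp add: field_simps mult.commute)
qed

lemma symmetric_scalar_prod_mult_vec:
  fixes A :: "real mat"
  assumes A: "A \<in> carrier_mat n n" and sym: "A\<^sup>T = A"
    and u: "u \<in> carrier_vec n" and w: "w \<in> carrier_vec n"
  shows "u \<bullet> (A *\<^sub>v w) = w \<bullet> (A *\<^sub>v u)"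
proof -
  have "u \<bullet> (A *\<^sub>v w) = (A\<^sup>T *\<^sub>v u) \<bullet> w"
    using transpose_vec_mult_scalar[OF A w u] by simp
  also have "\<dots> = w \<bullet> (A *\<^sub>v u)"
    unfolding sym by (rule comm_scalar_prod[of _ n]) (use A u w in auto)
  finally show ?thesis .
qed

lemma quadratic_form_add_smult:
  fixes A :: "real mat"
  assumes A: "A \<in> carrier_mat n n" and sym: "A\<^sup>T = A"
    and u: "u \<in> carrier_vec n" and w: "w \<in> carrier_vec n"
  shows "(u + t \<cdot>\<^sub>v w) \<bullet> (A *\<^sub>v (u + t \<cdot>\<^sub>v w))
     = u \<bullet> (A *\<^sub>v u) + 2 * (w \<bullet> (A *\<^sub>v u)) * t + (w \<bullet> (A *\<^sub>v w)) * t\<^sup>2"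
proof -
  have Au: "A *\<^sub>v u \<in> carrier_vec n" and Aw: "A *\<^sub>v w \<in> carrier_vec n"
    using A u w by auto
  have "A *\<^sub>v (u + t \<cdot>\<^sub>v w) = A *\<^sub>v u + t \<cdot>\<^sub>v (A *\<^sub>v w)"
    using mult_add_distrib_mat_vec[OF A u] mult_mat_vec[OF A w] w by simp
  hence "(u + t \<cdot>\<^sub>v w) \<bullet> (A *\<^sub>v (u + t \<cdot>\<^sub>v w))
      = u \<bullet> (A *\<^sub>v u) + t * (u \<bullet> (A *\<^sub>v w)) + t * (w \<bullet> (A *\<^sub>v u)) + t * t * (w \<bullet> (A *\<^sub>v w))"
    using u w Au Aw
    by (simp add: add_scalar_prod_distrib[of _ n] scalar_prod_add_distrib[of _ n] algebra_simps)
  with symmetric_scalar_prod_mult_vec[OF A sym u w] show ?thesis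
    by (simp add: power2_eq_square algebra_simps)
qed

definition psd_mat :: "real mat \<Rightarrow> nat \<Rightarrow> bool" where
  "psd_mat A n \<longleftrightarrow> A \<in> carrier_mat n n \<and> A\<^sup>T = A \<and> (\<forall>v \<in> carrier_vec n. 0 \<le> v \<bullet> (A *\<^sub>v v))"

lemma psd_mat_cauchy_schwarz:
  assumes psd: "psd_mat A n" and u: "u \<in> carrier_vec n" and w: "w \<in> carrier_vec n"
  shows "(w \<bullet> (A *\<^sub>v u))\<^sup>2 \<le> (u \<bullet> (A *\<^sub>v u)) * (w \<bullet> (A *\<^sub>v w))"
proof (rule nonneg_quadratic_discrim_le)
  have A: "A \<in> carrier_mat n n" and sym: "A\<^sup>T = A"
    and nonneg: "\<And>v. v \<in> carrier_vec n \<Longrightarrow> 0 \<le> v \<bullet> (A *\<^sub>v v)"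
    using psd unfolding psd_mat_def by auto
  show "0 \<le> u \<bullet> (A *\<^sub>v u) + 2 * (w \<bullet> (A *\<^sub>v u)) * t + (w \<bullet> (A *\<^sub>v w)) * t\<^sup>2" for t
    using nonneg[of "u + t \<cdot>\<^sub>v w"] quadratic_form_add_smult[OF A sym u w] u w by simp
  show "0 \<le> w \<bullet> (A *\<^sub>v w)" using nonneg w by simp
qed

lemma psd_mat_quadratic_form_eq_0:
  assumes psd: "psd_mat A n" and u: "u \<in> carrier_vec n" and zero: "u \<bullet> (A *\<^sub>v u) = 0"
  shows "A *\<^sub>v u = 0\<^sub>v n"
proof -
  have Au: "A *\<^sub>v u \<in> carrier_vec n" using psd u unfolding psd_mat_def by auto
  from psd_mat_cauchy_schwarz[OF psd u Au] zero
  have "((A *\<^sub>v u) \<bullet> (A *\<^sub>v u))\<^sup>2 \<le> 0" by simp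
  thus ?thesis using scalar_prod_self_eq_0_iff[OF Au] by simp
qed

lemma psd_mat_norm_sq_le:
  assumes psd: "psd_mat A n" and v: "v \<in> carrier_vec n" and "M \<ge> 0"
    and upper: "\<And>v. v \<in> carrier_vec n \<Longrightarrow> v \<bullet> (A *\<^sub>v v) \<le> M * (v \<bullet> v)"
  shows "(A *\<^sub>v v) \<bullet> (A *\<^sub>v v) \<le> M * (v \<bullet> (A *\<^sub>v v))"
proof -
  define w where "w = A *\<^sub>v v"
  have w: "w \<in> carrier_vec n" using psd v unfolding psd_mat_def w_def by auto
  have nonneg: "0 \<le> v \<bullet> (A *\<^sub>v v)" using psd v unfolding psd_mat_def by auto
  have "(w \<bullet> w)\<^sup>2 \<le> (v \<bullet> (A *\<^sub>v v)) * (w \<bullet> (A *\<^sub>v w))"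
    using psd_mat_cauchy_schwarz[OF psd v w] unfolding w_def by simp
  also have "\<dots> \<le> (v \<bullet> (A *\<^sub>v v)) * (M * (w \<bullet> w))"
    using upper[OF w] nonneg by (rule mult_left_mono)
  finally have "(w \<bullet> w) * (w \<bullet> w) \<le> (M * (v \<bullet> (A *\<^sub>v v))) * (w \<bullet> w)"
    by (simp add: power2_eq_square algebra_simps)
  moreover have "0 \<le> M * (v \<bullet> (A *\<^sub>v v))" using \<open>M \<ge> 0\<close> nonneg by simp
  ultimately show ?thesis
    using scalar_prod_self_nonneg[of w] unfolding w_def
    by (cases "w \<bullet> w = 0") (auto simp: w_def mult_le_cancel_right)
qed

lemma scalar_prod_cauchy_schwarz:
  fixes v w :: "real vec"
  assumes v: "v \<in> carrier_vec n" and w: "w \<in> carrier_vec n"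
  shows "(v \<bullet> w)\<^sup>2 \<le> (v \<bullet> v) * (w \<bullet> w)"
proof -
  have "psd_mat (1\<^sub>m n) n" unfolding psd_mat_def using scalar_prod_self_nonneg by auto
  from psd_mat_cauchy_schwarz[OF this v w] show ?thesis
    using v w comm_scalar_prod[OF v w] by simp
qed

lemma psd_mat_gram:
  fixes X :: "real mat"
  assumes X: "X \<in> carrier_mat n d"
  shows "psd_mat (X\<^sup>T * X) d"
  unfolding psd_mat_def
proof (intro conjI ballI)
  have XT: "X\<^sup>T \<in> carrier_mat d n" using X by simp
  show "X\<^sup>T * X \<in> carrier_mat d d" using X by simp
  show "(X\<^sup>T * X)\<^sup>T = X\<^sup>T * X" using transpose_mult[OF XT X] by simp
  fix v :: "real vec" assume v: "v \<in> carrier_vec d"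
  have Xv: "X *\<^sub>v v \<in> carrier_vec n" using X v by simp
  have "v \<bullet> ((X\<^sup>T * X) *\<^sub>v v) = (X\<^sup>T *\<^sub>v (X *\<^sub>v v)) \<bullet> v"
    using XT X v comm_scalar_prod[OF v, of "X\<^sup>T *\<^sub>v (X *\<^sub>v v)"] by simp
  also have "\<dots> = (X *\<^sub>v v) \<bullet> (X *\<^sub>v v)" by (rule transpose_vec_mult_scalar[OF X v Xv])
  finally show "0 \<le> v \<bullet> ((X\<^sup>T * X) *\<^sub>v v)" using scalar_prod_self_nonneg by simp
qed

lemma gradient_step_contraction:
  assumes psd: "psd_mat A n" and v: "v \<in> carrier_vec n" and "M > 0"
    and lower: "\<And>v. v \<in> carrier_vec n \<Longrightarrow> m * (v \<bullet> v) \<le> v \<bullet> (A *\<^sub>v v)"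
    and upper: "\<And>v. v \<in> carrier_vec n \<Longrightarrow> v \<bullet> (A *\<^sub>v v) \<le> M * (v \<bullet> v)"
  shows "(v - (1 / M) \<cdot>\<^sub>v (A *\<^sub>v v)) \<bullet> (v - (1 / M) \<cdot>\<^sub>v (A *\<^sub>v v)) \<le> (1 - m / M) * (v \<bullet> v)"
proof -
  have Av: "A *\<^sub>v v \<in> carrier_vec n" using psd v unfolding psd_mat_def by auto
  have "(v - (1 / M) \<cdot>\<^sub>v (A *\<^sub>v v)) \<bullet> (v - (1 / M) \<cdot>\<^sub>v (A *\<^sub>v v))
      = v \<bullet> v - 2 * (1 / M) * (v \<bullet> (A *\<^sub>v v)) + (1 / M)\<^sup>2 * ((A *\<^sub>v v) \<bullet> (A *\<^sub>v v))"
    by (rule scalar_prod_diff_smult_self[OF v Av])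
  also have "\<dots> \<le> v \<bullet> v - 2 * (1 / M) * (v \<bullet> (A *\<^sub>v v)) + (1 / M)\<^sup>2 * (M * (v \<bullet> (A *\<^sub>v v)))"
    using psd_mat_norm_sq_le[OF psd v _ upper] \<open>M > 0\<close> by (simp add: mult_left_mono)
  also have "\<dots> = v \<bullet> v - (1 / M) * (v \<bullet> (A *\<^sub>v v))"
    using \<open>M > 0\<close> by (simp add: field_simps power2_eq_square)
  also have "\<dots> \<le> v \<bullet> v - (1 / M) * (m * (v \<bullet> v))"
    using lower[OF v] \<open>M > 0\<close> by (simp add: divide_right_mono)
  also have "\<dots> = (1 - m / M) * (v \<bullet> v)" by (simp add: algebra_simps)
  finally show ?thesis .
qed

section \<open>Extreme eigenvalues of symmetric matrices\<close>

lemma compact_fun_unit_sphere: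
  "compact {f :: nat \<Rightarrow> real. (\<forall>i\<ge>d. f i = 0) \<and> (\<Sum>i<d. (f i)\<^sup>2) = 1}"
proof -
  define K :: "(nat \<Rightarrow> real) set" where "K = Pi UNIV (\<lambda>i. if i < d then {-1..1} else {0})"
  have "compactin (product_topology (\<lambda>i. euclidean) UNIV)
      (Pi\<^sub>E UNIV (\<lambda>i. if i < d then {-1..1::real} else {0}))"
    by (subst compactin_PiE) auto
  hence "compact K"
    unfolding K_def euclidean_product_topology PiE_UNIV_domain by (simp add: compactin_euclidean_iff)
  moreover have "closed {f :: nat \<Rightarrow> real. (\<Sum>i<d. (f i)\<^sup>2) = 1}"
    by (intro closed_Collect_eq continuous_on_sum continuous_on_power
        continuous_on_product_coordinates continuous_on_const)
  ultimately have "compact (K \<inter> {f. (\<Sum>i<d. (f i)\<^sup>2) = 1})" by (rule compact_Int_closed)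
  moreover have "K \<inter> {f. (\<Sum>i<d. (f i)\<^sup>2) = 1}
      = {f. (\<forall>i\<ge>d. f i = 0) \<and> (\<Sum>i<d. (f i)\<^sup>2) = 1}"
  proof (intro equalityI subsetI)
    fix f assume "f \<in> K \<inter> {f. (\<Sum>i<d. (f i)\<^sup>2) = 1}"
    thus "f \<in> {f. (\<forall>i\<ge>d. f i = 0) \<and> (\<Sum>i<d. (f i)\<^sup>2) = 1}"
      unfolding K_def by (auto simp: Pi_def) (metis empty_iff insert_iff not_le)
  next
    fix f :: "nat \<Rightarrow> real" assume f: "f \<in> {f. (\<forall>i\<ge>d. f i = 0) \<and> (\<Sum>i<d. (f i)\<^sup>2) = 1}"
    have "\<bar>f i\<bar> \<le> 1" if "i < d" for i
    proof -
      have "(f i)\<^sup>2 \<le> (\<Sum>i<d. (f i)\<^sup>2)" by (rule member_le_sum) (use that in auto)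
      with f show ?thesis using abs_le_square_iff[of "f i" 1] by simp
    qed
    with f show "f \<in> K \<inter> {f. (\<Sum>i<d. (f i)\<^sup>2) = 1}"
      unfolding K_def by (auto simp: Pi_def abs_le_iff not_less)
  qed
  ultimately show ?thesis by simp
qed

lemma scalar_prod_vec_self: "vec n f \<bullet> vec n f = (\<Sum>i<n. (f i :: real)\<^sup>2)"
  unfolding scalar_prod_def atLeast0LessThan by (intro sum.cong) (auto simp: power2_eq_square)

lemma quadratic_form_vec:
  fixes A :: "real mat"
  assumes A: "A \<in> carrier_mat n n"
  shows "vec n f \<bullet> (A *\<^sub>v vec n f) = (\<Sum>i<n. f i * (\<Sum>j<n. A $$ (i,j) * f j))"
  using A unfolding scalar_prod_def
  by (auto simp: atLeast0LessThan row_def scalar_prod_def intro!: sum.cong)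

lemma rayleigh_minimum_attained:
  fixes A :: "real mat"
  assumes A: "A \<in> carrier_mat d d" and "d \<ge> 1"
  shows "\<exists>u \<in> carrier_vec d. u \<bullet> u = 1 \<and>
           (\<forall>v \<in> carrier_vec d. (u \<bullet> (A *\<^sub>v u)) * (v \<bullet> v) \<le> v \<bullet> (A *\<^sub>v v))"
proof -
  define S where "S = {f :: nat \<Rightarrow> real. (\<forall>i\<ge>d. f i = 0) \<and> (\<Sum>i<d. (f i)\<^sup>2) = 1}"
  define g where "g f = vec d f \<bullet> (A *\<^sub>v vec d f)" for f
  have "continuous_on UNIV g" unfolding g_def quadratic_form_vec[OF A]
    by (intro continuous_on_sum continuous_on_mult continuous_on_const continuous_on_product_coordinates)
  hence "continuous_on S g" by (rule continuous_on_subset) simp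
  moreover have "(\<lambda>i. if i = 0 then 1 else 0) \<in> S"
    using \<open>d \<ge> 1\<close> unfolding S_def by (auto simp: sum.remove[of "{..<d}" 0] intro!: sum.neutral)
  ultimately obtain f where f: "f \<in> S" and min: "\<And>h. h \<in> S \<Longrightarrow> g f \<le> g h"
    using continuous_attains_inf[OF compact_fun_unit_sphere[of d, folded S_def]] by blast
  define u where "u = vec d f"
  have u: "u \<in> carrier_vec d" "u \<bullet> u = 1" using f unfolding u_def S_def scalar_prod_vec_self by auto
  have "(u \<bullet> (A *\<^sub>v u)) * (v \<bullet> v) \<le> v \<bullet> (A *\<^sub>v v)" if v: "v \<in> carrier_vec d" for v
  proof (cases "v = 0\<^sub>v d")
    case True thus ?thesis using A by simp
  next
    case False
    define s where "s = sqrt (v \<bullet> v)"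
    have vv: "v \<bullet> v > 0"
      using False scalar_prod_self_nonneg[of v] scalar_prod_self_eq_0_iff[OF v] by linarith
    hence s: "s > 0" "s\<^sup>2 = v \<bullet> v" unfolding s_def by auto
    define h where "h i = (if i < d then v $ i / s else 0)" for i
    have vh: "vec d h = (1 / s) \<cdot>\<^sub>v v" unfolding h_def by (intro eq_vecI) (use v in auto)
    have "vec d h \<bullet> vec d h = 1" unfolding vh using v s vv by (simp add: power2_eq_square)
    hence "h \<in> S" unfolding S_def scalar_prod_vec_self by (simp add: h_def)
    hence "u \<bullet> (A *\<^sub>v u) \<le> (1 / s) * (1 / s) * (v \<bullet> (A *\<^sub>v v))"
      using min[of h] v A unfolding g_def u_def[symmetric] vh by (simp add: mult_mat_vec[OF A v])
    hence "s\<^sup>2 * (u \<bullet> (A *\<^sub>v u)) \<le> v \<bullet> (A *\<^sub>v v)"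
      using s(1) by (simp add: field_simps power2_eq_square)
    thus ?thesis unfolding s(2) by (simp add: mult.commute)
  qed
  with u show ?thesis by blast
qed

lemma smult_mat_mult_vec:
  fixes A :: "'a :: comm_ring mat"
  assumes A: "A \<in> carrier_mat nr nc" and v: "v \<in> carrier_vec nc"
  shows "(k \<cdot>\<^sub>m A) *\<^sub>v v = k \<cdot>\<^sub>v (A *\<^sub>v v)"
  by (intro eq_vecI) (use A v in \<open>auto simp: smult_scalar_prod_distrib[of _ nc]\<close>)

lemma char_matrix_quadratic_form:
  fixes A :: "real mat"
  assumes A: "A \<in> carrier_mat n n" and v: "v \<in> carrier_vec n"
  shows "v \<bullet> (char_matrix A e *\<^sub>v v) = v \<bullet> (A *\<^sub>v v) - e * (v \<bullet> v)"
proof -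
  have "char_matrix A e *\<^sub>v v = A *\<^sub>v v + (- e) \<cdot>\<^sub>v v"
    unfolding char_matrix_def using A v
    by (simp add: add_mult_distrib_mat_vec[of _ n n] smult_mat_mult_vec[of _ n n])
  thus ?thesis using A v by (simp add: scalar_prod_add_distrib[of _ n])
qed

text \<open>At a minimiser u of the Rayleigh quotient, char_matrix A m is positive semidefinite
  and its quadratic form vanishes at u, so u lies in its kernel.\<close>

lemma symmetric_rayleigh_min_eigenvalue:
  fixes A :: "real mat"
  assumes A: "A \<in> carrier_mat d d" and sym: "A\<^sup>T = A" and "d \<ge> 1"
  shows "\<exists>m. eigenvalue A m \<and> (\<forall>v \<in> carrier_vec d. m * (v \<bullet> v) \<le> v \<bullet> (A *\<^sub>v v))"
proof -
  obtain u where u: "u \<in> carrier_vec d" "u \<bullet> u = 1"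
    and min: "\<And>v. v \<in> carrier_vec d \<Longrightarrow> (u \<bullet> (A *\<^sub>v u)) * (v \<bullet> v) \<le> v \<bullet> (A *\<^sub>v v)"
    using rayleigh_minimum_attained[OF A \<open>d \<ge> 1\<close>] by blast
  define m where "m = u \<bullet> (A *\<^sub>v u)"
  have "psd_mat (char_matrix A m) d" unfolding psd_mat_def
  proof (intro conjI ballI)
    show "char_matrix A m \<in> carrier_mat d d" using A by simp
    show "(char_matrix A m)\<^sup>T = char_matrix A m"
      unfolding char_matrix_def using A sym
      by (simp add: transpose_add[of _ d d]) (intro eq_matI; auto)
    show "0 \<le> v \<bullet> (char_matrix A m *\<^sub>v v)" if "v \<in> carrier_vec d" for v
      using min[OF that] char_matrix_quadratic_form[OF A that] unfolding m_def by simp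
  qed
  moreover have "u \<bullet> (char_matrix A m *\<^sub>v u) = 0"
    using char_matrix_quadratic_form[OF A u(1)] u(2) unfolding m_def by simp
  ultimately have "char_matrix A m *\<^sub>v u = 0\<^sub>v d" using u(1) by (simp add: psd_mat_quadratic_form_eq_0)
  moreover have "u \<noteq> 0\<^sub>v d" using u by auto
  ultimately have "eigenvalue A m"
    unfolding eigenvalue_def eigenvector_char_matrix[OF A] using u(1) by blast
  with min show ?thesis unfolding m_def by blast
qed

lemma eigenvalue_obtain_eigenvector:
  fixes A :: "real mat"
  assumes A: "A \<in> carrier_mat n n" and "eigenvalue A k"
  obtains w where "w \<in> carrier_vec n" "w \<bullet> w > 0" "A *\<^sub>v w = k \<cdot>\<^sub>v w"
proof -
  from assms obtain w where w: "w \<in> carrier_vec n" "w \<noteq> 0\<^sub>v n" "A *\<^sub>v w = k \<cdot>\<^sub>v w"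
    unfolding eigenvalue_def eigenvector_def by auto
  have "w \<bullet> w > 0"
    using w scalar_prod_self_nonneg[of w] scalar_prod_self_eq_0_iff[OF w(1)] by linarith
  with w that show ?thesis by blast
qed

lemma eigenvalue_ge_rayleigh_bound:
  fixes A :: "real mat"
  assumes A: "A \<in> carrier_mat n n" and "eigenvalue A k"
    and lower: "\<And>v. v \<in> carrier_vec n \<Longrightarrow> m * (v \<bullet> v) \<le> v \<bullet> (A *\<^sub>v v)"
  shows "m \<le> k"
proof -
  obtain w where w: "w \<in> carrier_vec n" "w \<bullet> w > 0" "A *\<^sub>v w = k \<cdot>\<^sub>v w"
    using eigenvalue_obtain_eigenvector[OF assms(1,2)] .
  from lower[OF w(1)] w have "m * (w \<bullet> w) \<le> k * (w \<bullet> w)" by simp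
  with w(2) show ?thesis by simp
qed

lemma lambda_min_rayleigh:
  fixes A :: "real mat"
  assumes A: "A \<in> carrier_mat d d" and sym: "A\<^sup>T = A" and "d \<ge> 1"
  shows "eigenvalue A (lambda_min A)"
    and "v \<in> carrier_vec d \<Longrightarrow> lambda_min A * (v \<bullet> v) \<le> v \<bullet> (A *\<^sub>v v)"
proof -
  obtain m where m: "eigenvalue A m" and lower: "\<And>v. v \<in> carrier_vec d \<Longrightarrow> m * (v \<bullet> v) \<le> v \<bullet> (A *\<^sub>v v)"
    using symmetric_rayleigh_min_eigenvalue[OF assms] by blast
  have "lambda_min A = m" unfolding lambda_min_def
    using card_finite_spectrum(1)[OF A] m eigenvalue_ge_rayleigh_bound[OF A _ lower]
    by (intro Min_eqI) (auto simp: spectrum_def)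
  with m lower show "eigenvalue A (lambda_min A)"
    and "v \<in> carrier_vec d \<Longrightarrow> lambda_min A * (v \<bullet> v) \<le> v \<bullet> (A *\<^sub>v v)" by auto
qed

lemma eigenvalue_uminus:
  fixes A :: "real mat"
  assumes "A \<in> carrier_mat n n"
  shows "eigenvalue (- A) k \<longleftrightarrow> eigenvalue A (- k)"
proof -
  have "- A *\<^sub>v v = k \<cdot>\<^sub>v v \<longleftrightarrow> A *\<^sub>v v = (- k) \<cdot>\<^sub>v v" if "v \<in> carrier_vec n" for v
    using assms that by (auto simp: vec_eq_iff)
  thus ?thesis using assms unfolding eigenvalue_def eigenvector_def
    by (auto simp del: uminus_mult_mat_vec)
qed

lemma lambda_max_rayleigh:
  fixes A :: "real mat"
  assumes A: "A \<in> carrier_mat d d" and sym: "A\<^sup>T = A" and "d \<ge> 1"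
  shows "eigenvalue A (lambda_max A)"
    and "v \<in> carrier_vec d \<Longrightarrow> v \<bullet> (A *\<^sub>v v) \<le> lambda_max A * (v \<bullet> v)"
proof -
  have nA: "- A \<in> carrier_mat d d" and nsym: "(- A)\<^sup>T = - A"
    using A sym by (auto simp: transpose_uminus)
  define M where "M = - lambda_min (- A)"
  have M: "eigenvalue A M"
    using lambda_min_rayleigh(1)[OF nA nsym \<open>d \<ge> 1\<close>] eigenvalue_uminus[OF A] unfolding M_def by simp
  have upper: "v \<bullet> (A *\<^sub>v v) \<le> M * (v \<bullet> v)" if "v \<in> carrier_vec d" for v
    using lambda_min_rayleigh(2)[OF nA nsym \<open>d \<ge> 1\<close> that] A that unfolding M_def by simp
  have "k \<le> M" if "eigenvalue A k" for k
  proof -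
    have "eigenvalue (- A) (- k)" using that eigenvalue_uminus[OF A] by simp
    hence "lambda_min (- A) \<le> - k" unfolding lambda_min_def
      using card_finite_spectrum(1)[OF nA] by (intro Min_le) (auto simp: spectrum_def)
    thus ?thesis unfolding M_def by simp
  qed
  hence "lambda_max A = M" unfolding lambda_max_def
    using card_finite_spectrum(1)[OF A] M by (intro Max_eqI) (auto simp: spectrum_def)
  with M upper show "eigenvalue A (lambda_max A)"
    and "v \<in> carrier_vec d \<Longrightarrow> v \<bullet> (A *\<^sub>v v) \<le> lambda_max A * (v \<bullet> v)" by auto
qed

lemma vnorm2_eq_sqrt_scalar_prod: "vnorm2 v = sqrt (v \<bullet> v)"
  unfolding vnorm2_def scalar_prod_def atLeast0LessThan by (simp add: power2_eq_square)

lemma spec_norm_psd_mat: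
  assumes psd: "psd_mat A d" and "d \<ge> 1"
  shows "spec_norm A = lambda_max A"
proof -
  have A: "A \<in> carrier_mat d d" and sym: "A\<^sup>T = A" using psd unfolding psd_mat_def by auto
  define M where "M = lambda_max A"
  have upper: "\<And>v. v \<in> carrier_vec d \<Longrightarrow> v \<bullet> (A *\<^sub>v v) \<le> M * (v \<bullet> v)"
    using lambda_max_rayleigh(2)[OF A sym \<open>d \<ge> 1\<close>] unfolding M_def .
  obtain w where w: "w \<in> carrier_vec d" "w \<bullet> w > 0" "A *\<^sub>v w = M \<cdot>\<^sub>v w"
    using eigenvalue_obtain_eigenvector[OF A lambda_max_rayleigh(1)[OF A sym \<open>d \<ge> 1\<close>]]
    unfolding M_def .
  have "0 \<le> M * (w \<bullet> w)" using psd w unfolding psd_mat_def by auto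
  with w(2) have "M \<ge> 0" by (simp add: zero_le_mult_iff)
  define u where "u = (1 / sqrt (w \<bullet> w)) \<cdot>\<^sub>v w"
  have u: "u \<in> carrier_vec d" "u \<bullet> u = 1" "A *\<^sub>v u = M \<cdot>\<^sub>v u"
    unfolding u_def using w mult_mat_vec[OF A w(1)] by (auto simp: smult_smult_assoc mult.commute)
  have "vnorm2 (A *\<^sub>v u) = M" "vnorm2 u = 1"
    unfolding vnorm2_eq_sqrt_scalar_prod u(3) using u \<open>M \<ge> 0\<close> by simp_all
  hence mem: "M \<in> {vnorm2 (A *\<^sub>v v) | v. v \<in> carrier_vec (dim_col A) \<and> vnorm2 v = 1}"
    using u(1) A by force
  have "vnorm2 (A *\<^sub>v v) \<le> M" if v: "v \<in> carrier_vec d" "vnorm2 v = 1" for v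
  proof -
    have vv: "v \<bullet> v = 1" using v(2) scalar_prod_self_nonneg[of v]
      unfolding vnorm2_eq_sqrt_scalar_prod by simp
    have "(A *\<^sub>v v) \<bullet> (A *\<^sub>v v) \<le> M * (v \<bullet> (A *\<^sub>v v))"
      by (rule psd_mat_norm_sq_le[OF psd v(1) \<open>M \<ge> 0\<close> upper])
    also have "\<dots> \<le> M * M" using upper[OF v(1)] vv \<open>M \<ge> 0\<close> by (simp add: mult_left_mono)
    finally show ?thesis
      unfolding vnorm2_eq_sqrt_scalar_prod using \<open>M \<ge> 0\<close> real_sqrt_le_mono by fastforce
  qed
  hence "\<And>x. x \<in> {vnorm2 (A *\<^sub>v v) | v. v \<in> carrier_vec (dim_col A) \<and> vnorm2 v = 1} \<Longrightarrow> x \<le> M"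
    using A by auto
  with mem show ?thesis unfolding spec_norm_def M_def by (rule cSup_eq_maximum)
qed

lemma lambda_min_pos:
  assumes psd: "psd_mat A d" and inv: "invertible_mat A" and "d \<ge> 1"
  shows "lambda_min A > 0"
proof -
  have A: "A \<in> carrier_mat d d" and sym: "A\<^sup>T = A" using psd unfolding psd_mat_def by auto
  obtain w where w: "w \<in> carrier_vec d" "w \<bullet> w > 0" "A *\<^sub>v w = lambda_min A \<cdot>\<^sub>v w"
    using eigenvalue_obtain_eigenvector[OF A lambda_min_rayleigh(1)[OF A sym \<open>d \<ge> 1\<close>]] .
  have "0 \<le> lambda_min A * (w \<bullet> w)" using psd w unfolding psd_mat_def by auto
  with w(2) have "lambda_min A \<ge> 0" by (simp add: zero_le_mult_iff)
  moreover have "lambda_min A \<noteq> 0"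
  proof
    assume "lambda_min A = 0"
    with w have Aw: "A *\<^sub>v w = 0\<^sub>v d" by (auto simp: vec_eq_iff)
    from inv A obtain B where B: "B \<in> carrier_mat d d" "B * A = 1\<^sub>m d"
      unfolding invertible_mat_def inverts_mat_def
      by (metis carrier_matD carrier_matI index_mult_mat(3) index_one_mat(3))
    have "w = (B * A) *\<^sub>v w" using B w by simp
    also have "\<dots> = B *\<^sub>v (A *\<^sub>v w)" using A B w by (intro assoc_mult_mat_vec)
    also have "\<dots> = 0\<^sub>v d" unfolding Aw using B by (intro eq_vecI) auto
    finally show False using w(2) by simp
  qed
  ultimately show ?thesis by simp
qed

section \<open>The looped transformer on a regression prompt\<close>

lemma index_mult_mat_sum:
  fixes A B :: "real mat"
  assumes "i < dim_row A" "j < dim_col B" "dim_row B = dim_col A"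
  shows "(A * B) $$ (i,j) = (\<Sum>k<dim_col A. A $$ (i,k) * B $$ (k,j))"
  using assms unfolding index_mult_mat(1)[OF assms(1,2)] scalar_prod_def
  by (auto simp: atLeast0LessThan intro!: sum.cong)

lemma index_mult_mat_vec_sum:
  fixes X :: "real mat"
  assumes "X \<in> carrier_mat n d" and "v \<in> carrier_vec d" and "k < n"
  shows "(X *\<^sub>v v) $ k = (\<Sum>l<d. X $$ (k,l) * v $ l)"
  using assms by (auto simp: scalar_prod_def atLeast0LessThan intro!: sum.cong)

definition proj_mat :: "nat \<Rightarrow> real mat" where
  "proj_mat d = four_block_mat (1\<^sub>m d) (0\<^sub>m d 1) (0\<^sub>m 1 d) (0\<^sub>m 1 1)"

lemma proj_mat_carrier: "proj_mat d \<in> carrier_mat (d+1) (d+1)"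
  unfolding proj_mat_def by auto

lemma proj_mat_index:
  "l < d+1 \<Longrightarrow> j < d+1 \<Longrightarrow> proj_mat d $$ (l,j) = (if l < d \<and> l = j then 1 else 0)"
  unfolding proj_mat_def by (auto simp: index_mat_four_block)

lemma Attn_identity_proj_index:
  fixes Z :: "real mat"
  assumes Z: "Z \<in> carrier_mat (n+1) (d+1)" and i: "i < n+1" and j: "j < d+1"
  shows "Attn Z (1\<^sub>m (d+1)) (proj_mat d) $$ (i,j) =
    (if i = n \<and> j < d then (\<Sum>k<n. (\<Sum>l<d+1. Z $$ (n,l) * Z $$ (k,l)) * Z $$ (k,j)) else 0)"
proof -
  have dr: "dim_row Z = n+1" and dc: "dim_col Z = d+1" using Z by auto
  define H where "H = hadamard (attn_mask (n+1)) (Z * Z\<^sup>T)"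
  have Attn: "Attn Z (1\<^sub>m (d+1)) (proj_mat d) = H * Z * proj_mat d"
    unfolding Attn_def H_def dr using dc by simp
  have H: "dim_row H = n+1" "dim_col H = n+1" unfolding H_def hadamard_def attn_mask_def by auto
  have H_index: "H $$ (a,k) = (if a = n \<and> k < n then (\<Sum>l<d+1. Z $$ (n,l) * Z $$ (k,l)) else 0)"
    if "a < n+1" "k < n+1" for a k
  proof -
    have "(Z * Z\<^sup>T) $$ (a,k) = (\<Sum>l<d+1. Z $$ (a,l) * Z\<^sup>T $$ (l,k))"
      using index_mult_mat_sum[of a Z k "Z\<^sup>T"] that dr dc by simp
    also have "\<dots> = (\<Sum>l<d+1. Z $$ (a,l) * Z $$ (k,l))"
      by (intro sum.cong) (use that dr dc in auto)
    finally have "(Z * Z\<^sup>T) $$ (a,k) = (\<Sum>l<d+1. Z $$ (a,l) * Z $$ (k,l))" .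
    thus ?thesis unfolding H_def hadamard_def attn_mask_def using that by auto
  qed
  have HZ_index: "(H * Z) $$ (a,l) =
      (if a = n then (\<Sum>k<n. (\<Sum>l'<d+1. Z $$ (n,l') * Z $$ (k,l')) * Z $$ (k,l)) else 0)"
    if "a < n+1" "l < d+1" for a l
  proof -
    have "(H * Z) $$ (a,l) = (\<Sum>k<n+1. H $$ (a,k) * Z $$ (k,l))"
      using index_mult_mat_sum[of a H l Z] that dr dc H by simp
    also have "\<dots> = (\<Sum>k<n+1. (if a = n \<and> k < n then (\<Sum>l'<d+1. Z $$ (n,l') * Z $$ (k,l')) else 0) * Z $$ (k,l))"
      by (intro sum.cong) (use that H_index in auto)
    finally show ?thesis by (auto intro!: sum.cong)
  qed
  have "(H * Z * proj_mat d) $$ (i,j) = (\<Sum>l<d+1. (H * Z) $$ (i,l) * proj_mat d $$ (l,j))"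
    using index_mult_mat_sum[of i "H * Z" j "proj_mat d"] i j dr dc H proj_mat_carrier[of d] by simp
  also have "\<dots> = (\<Sum>l<d+1. (H * Z) $$ (i,l) * (if l < d \<and> l = j then 1 else 0))"
    by (intro sum.cong) (use j proj_mat_index in auto)
  also have "\<dots> = (if j < d then (H * Z) $$ (i,j) else 0)"
    using j by (auto simp: if_distrib cong: if_cong)
  finally show ?thesis unfolding Attn using HZ_index[OF i] j by auto
qed

definition prompt_mat :: "real mat \<Rightarrow> real vec \<Rightarrow> real vec \<Rightarrow> real \<Rightarrow> real mat" where
  "prompt_mat X y q \<alpha> = four_block_mat X (mat_of_cols (dim_row X) [y])
     (mat_of_rows (dim_col X) [q]) (mat 1 1 (\<lambda>_. \<alpha>))"

lemma prompt_mat_dims [simp]: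
  "dim_row (prompt_mat X y q \<alpha>) = dim_row X + 1" "dim_col (prompt_mat X y q \<alpha>) = dim_col X + 1"
  unfolding prompt_mat_def by auto

lemma prompt_mat_carrier:
  "X \<in> carrier_mat n d \<Longrightarrow> prompt_mat X y q \<alpha> \<in> carrier_mat (n+1) (d+1)"
  by auto

lemma prompt_mat_index:
  assumes "X \<in> carrier_mat n d" "i < n+1" "j < d+1"
  shows "prompt_mat X y q \<alpha> $$ (i,j) =
    (if i < n then (if j < d then X $$ (i,j) else y $ i) else (if j < d then q $ j else \<alpha>))"
  using assms unfolding prompt_mat_def by (auto simp: mat_of_cols_index mat_of_rows_index)

text \<open>Gradient descent on q \<mapsto> \<parallel>X q + \<alpha> y\<parallel>^2 / 2, the in-context least-squares problem
  encoded by the prompt.\<close>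

fun gd_iterate :: "real mat \<Rightarrow> real vec \<Rightarrow> real \<Rightarrow> real \<Rightarrow> real vec \<Rightarrow> nat \<Rightarrow> real vec" where
  "gd_iterate X y \<alpha> \<eta> q 0 = q"
| "gd_iterate X y \<alpha> \<eta> q (Suc t) = gd_iterate X y \<alpha> \<eta> q t
     - \<eta> \<cdot>\<^sub>v (X\<^sup>T *\<^sub>v (X *\<^sub>v gd_iterate X y \<alpha> \<eta> q t + \<alpha> \<cdot>\<^sub>v y))"

lemma gd_iterate_carrier:
  "X \<in> carrier_mat n d \<Longrightarrow> q \<in> carrier_vec d \<Longrightarrow> gd_iterate X y \<alpha> \<eta> q t \<in> carrier_vec d"
proof (induction t)
  case (Suc t)
  have "X\<^sup>T *\<^sub>v w \<in> carrier_vec d" for w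
    using \<open>X \<in> carrier_mat n d\<close> unfolding carrier_vec_def by simp
  with Suc show ?case by simp
qed simp

lemma Attn_prompt_mat_index:
  fixes X :: "real mat"
  assumes X: "X \<in> carrier_mat n d" and y: "y \<in> carrier_vec n" and q: "q \<in> carrier_vec d"
    and i: "i < n+1" and j: "j < d+1"
  shows "Attn (prompt_mat X y q \<alpha>) (1\<^sub>m (d+1)) (proj_mat d) $$ (i,j) =
    (if i = n \<and> j < d then (X\<^sup>T *\<^sub>v (X *\<^sub>v q + \<alpha> \<cdot>\<^sub>v y)) $ j else 0)"
proof -
  define Z where "Z = prompt_mat X y q \<alpha>"
  define r where "r = X *\<^sub>v q + \<alpha> \<cdot>\<^sub>v y"
  have r: "r \<in> carrier_vec n" unfolding r_def using X y q by simp
  have Z_index: "Z $$ (a,b) =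
      (if a < n then (if b < d then X $$ (a,b) else y $ a) else (if b < d then q $ b else \<alpha>))"
    if "a < n+1" "b < d+1" for a b
    unfolding Z_def using prompt_mat_index[OF X that] .
  have inner: "(\<Sum>l<d+1. Z $$ (n,l) * Z $$ (k,l)) = r $ k" if k: "k < n" for k
  proof -
    have "(\<Sum>l<d+1. Z $$ (n,l) * Z $$ (k,l)) = (\<Sum>l<d. X $$ (k,l) * q $ l) + \<alpha> * y $ k"
      using k by (simp add: Z_index mult.commute)
    thus ?thesis unfolding r_def using index_mult_mat_vec_sum[OF X q k] X y q k by simp
  qed
  have "(\<Sum>k<n. (\<Sum>l<d+1. Z $$ (n,l) * Z $$ (k,l)) * Z $$ (k,j)) = (X\<^sup>T *\<^sub>v r) $ j" if "j < d"
  proof -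
    have "(\<Sum>k<n. (\<Sum>l<d+1. Z $$ (n,l) * Z $$ (k,l)) * Z $$ (k,j)) = (\<Sum>k<n. X\<^sup>T $$ (j,k) * r $ k)"
      using inner Z_index X that by (intro sum.cong) auto
    also have "\<dots> = (X\<^sup>T *\<^sub>v r) $ j"
      by (rule index_mult_mat_vec_sum[symmetric]) (use X r that in auto)
    finally show ?thesis .
  qed
  with Attn_identity_proj_index[OF prompt_mat_carrier[OF X] i j] show ?thesis
    unfolding Z_def r_def by simp
qed

lemma Attn_dims: "dim_row (Attn Z Q P) = dim_row Z" "dim_col (Attn Z Q P) = dim_col P"
  unfolding Attn_def hadamard_def attn_mask_def by auto

lemma prompt_mat_attn_step:
  fixes X :: "real mat"
  assumes X: "X \<in> carrier_mat n d" and y: "y \<in> carrier_vec n" and q: "q \<in> carrier_vec d"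
  shows "prompt_mat X y q \<alpha> - \<eta> \<cdot>\<^sub>m Attn (prompt_mat X y q \<alpha>) (1\<^sub>m (d+1)) (proj_mat d)
    = prompt_mat X y (q - \<eta> \<cdot>\<^sub>v (X\<^sup>T *\<^sub>v (X *\<^sub>v q + \<alpha> \<cdot>\<^sub>v y))) \<alpha>"
  (is "?Z - \<eta> \<cdot>\<^sub>m ?A = ?Z'")
proof (rule eq_matI)
  have Z: "?Z \<in> carrier_mat (n+1) (d+1)" and Z': "?Z' \<in> carrier_mat (n+1) (d+1)"
    using X by auto
  have A: "dim_row ?A = n+1" "dim_col ?A = d+1"
    using Z proj_mat_carrier[of d] by (auto simp: Attn_dims)
  show "dim_row (?Z - \<eta> \<cdot>\<^sub>m ?A) = dim_row ?Z'" "dim_col (?Z - \<eta> \<cdot>\<^sub>m ?A) = dim_col ?Z'"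
    using Z Z' A by auto
  fix i j assume "i < dim_row ?Z'" "j < dim_col ?Z'"
  hence ij: "i < n+1" "j < d+1" using Z' by auto
  show "(?Z - \<eta> \<cdot>\<^sub>m ?A) $$ (i,j) = ?Z' $$ (i,j)"
    using ij Z A Attn_prompt_mat_index[OF X y q ij] prompt_mat_index[OF X ij]
      prompt_mat_index[OF X ij, of y "q - \<eta> \<cdot>\<^sub>v (X\<^sup>T *\<^sub>v (X *\<^sub>v q + \<alpha> \<cdot>\<^sub>v y))"] X q
    by simp
qed

lemma loopZ_prompt_mat:
  fixes X :: "real mat"
  assumes X: "X \<in> carrier_mat n d" and y: "y \<in> carrier_vec n" and q: "q \<in> carrier_vec d"
  shows "loopZ (\<lambda>_. \<eta>) (1\<^sub>m (d+1)) (proj_mat d) (prompt_mat X y q \<alpha>) t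
    = prompt_mat X y (gd_iterate X y \<alpha> \<eta> q t) \<alpha>"
proof (induction t)
  case (Suc t)
  thus ?case using prompt_mat_attn_step[OF X y gd_iterate_carrier[OF X q, of y \<alpha> \<eta> t]] by simp
qed simp

lemma TF_prompt_mat:
  fixes X :: "real mat"
  assumes X: "X \<in> carrier_mat n d" and y: "y \<in> carrier_vec n" and q: "q \<in> carrier_vec d"
  shows "TF (\<lambda>_. \<eta>) T (1\<^sub>m (d+1)) (proj_mat d) (prompt_mat X y q \<alpha>) = - gd_iterate X y \<alpha> \<eta> q T"
proof -
  have q': "gd_iterate X y \<alpha> \<eta> q T \<in> carrier_vec d" by (rule gd_iterate_carrier[OF X q])
  have "TF (\<lambda>_. \<eta>) T (1\<^sub>m (d+1)) (proj_mat d) (prompt_mat X y q \<alpha>)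
      = vec d (\<lambda>j. - prompt_mat X y (gd_iterate X y \<alpha> \<eta> q T) \<alpha> $$ (n, j))"
    unfolding TF_def Let_def loopZ_prompt_mat[OF X y q] using X by simp
  also have "\<dots> = - gd_iterate X y \<alpha> \<eta> q T"
    using q' prompt_mat_index[OF X] by (intro eq_vecI) auto
  finally show ?thesis .
qed

section \<open>Convergence of the loop\<close>

lemma gd_iterate_error_step:
  fixes X :: "real mat"
  assumes X: "X \<in> carrier_mat n d" and \<theta>: "\<theta> \<in> carrier_vec d" and p: "p \<in> carrier_vec d"
  shows "p - \<eta> \<cdot>\<^sub>v (X\<^sup>T *\<^sub>v (X *\<^sub>v p + \<alpha> \<cdot>\<^sub>v (X *\<^sub>v \<theta>))) + \<alpha> \<cdot>\<^sub>v \<theta>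
    = (p + \<alpha> \<cdot>\<^sub>v \<theta>) - \<eta> \<cdot>\<^sub>v ((X\<^sup>T * X) *\<^sub>v (p + \<alpha> \<cdot>\<^sub>v \<theta>))"
proof -
  have "X *\<^sub>v p + \<alpha> \<cdot>\<^sub>v (X *\<^sub>v \<theta>) = X *\<^sub>v (p + \<alpha> \<cdot>\<^sub>v \<theta>)"
    using X \<theta> p by (simp add: mult_add_distrib_mat_vec[OF X] mult_mat_vec[OF X])
  moreover have "X\<^sup>T *\<^sub>v (X *\<^sub>v (p + \<alpha> \<cdot>\<^sub>v \<theta>)) = (X\<^sup>T * X) *\<^sub>v (p + \<alpha> \<cdot>\<^sub>v \<theta>)"
    using X \<theta> p by simp
  moreover have "X\<^sup>T * X \<in> carrier_mat d d" using X by simp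
  ultimately show ?thesis using \<theta> p by (intro eq_vecI) auto
qed

lemma gd_iterate_error_bound:
  fixes X :: "real mat" and \<alpha> :: real
  assumes X: "X \<in> carrier_mat n d" and \<theta>: "\<theta> \<in> carrier_vec d" and q: "q \<in> carrier_vec d"
    and "0 < M" and "m \<le> M"
    and lower: "\<And>v. v \<in> carrier_vec d \<Longrightarrow> m * (v \<bullet> v) \<le> v \<bullet> ((X\<^sup>T * X) *\<^sub>v v)"
    and upper: "\<And>v. v \<in> carrier_vec d \<Longrightarrow> v \<bullet> ((X\<^sup>T * X) *\<^sub>v v) \<le> M * (v \<bullet> v)"
  defines "e t \<equiv> gd_iterate X (X *\<^sub>v \<theta>) \<alpha> (1 / M) q t + \<alpha> \<cdot>\<^sub>v \<theta>"
  shows "e t \<bullet> e t \<le> (1 - m / M) ^ t * (e 0 \<bullet> e 0)"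
proof (induction t)
  case (Suc t)
  have e: "e t \<in> carrier_vec d" unfolding e_def using gd_iterate_carrier[OF X q] \<theta> by simp
  have "e (Suc t) = e t - (1 / M) \<cdot>\<^sub>v ((X\<^sup>T * X) *\<^sub>v e t)"
    unfolding e_def using gd_iterate_error_step[OF X \<theta> gd_iterate_carrier[OF X q]] by simp
  hence "e (Suc t) \<bullet> e (Suc t) \<le> (1 - m / M) * (e t \<bullet> e t)"
    using gradient_step_contraction[OF psd_mat_gram[OF X] e \<open>0 < M\<close> lower upper] by simp
  also have "\<dots> \<le> (1 - m / M) * ((1 - m / M) ^ t * (e 0 \<bullet> e 0))"
    using Suc \<open>0 < M\<close> \<open>m \<le> M\<close> by (intro mult_left_mono) auto
  finally show ?case by simp
qed simp

lemma one_minus_power_le_exp: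
  fixes x :: real
  assumes "x \<le> 1"
  shows "(1 - x) ^ T \<le> exp (- real T * x)"
proof -
  have "(1 - x) ^ T \<le> exp (- x) ^ T"
    using exp_ge_add_one_self[of "- x"] assms by (intro power_mono) auto
  thus ?thesis by (simp add: exp_of_nat_mult[symmetric])
qed

lemma TF_prompt_mat_error_bound:
  fixes X :: "real mat" and \<alpha> :: real
  assumes X: "X \<in> carrier_mat n d" and \<theta>: "\<theta> \<in> carrier_vec d" and \<theta>\<theta>: "\<theta> \<bullet> \<theta> = 1"
    and "0 < m" and "m \<le> M"
    and lower: "\<And>v. v \<in> carrier_vec d \<Longrightarrow> m * (v \<bullet> v) \<le> v \<bullet> ((X\<^sup>T * X) *\<^sub>v v)"
    and upper: "\<And>v. v \<in> carrier_vec d \<Longrightarrow> v \<bullet> ((X\<^sup>T * X) *\<^sub>v v) \<le> M * (v \<bullet> v)"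
  shows "\<bar>TF (\<lambda>_. 1 / M) T (1\<^sub>m (d+1)) (proj_mat d) (prompt_mat X (X *\<^sub>v \<theta>) (0\<^sub>v d) \<alpha>) \<bullet> \<theta> - \<alpha>\<bar>
    \<le> \<bar>\<alpha>\<bar> * exp (- real T / (2 * (M / m)))"
proof -
  define e where "e = gd_iterate X (X *\<^sub>v \<theta>) \<alpha> (1 / M) (0\<^sub>v d) T + \<alpha> \<cdot>\<^sub>v \<theta>"
  have e: "e \<in> carrier_vec d" unfolding e_def using gd_iterate_carrier[OF X] \<theta> by simp
  have "TF (\<lambda>_. 1 / M) T (1\<^sub>m (d+1)) (proj_mat d) (prompt_mat X (X *\<^sub>v \<theta>) (0\<^sub>v d) \<alpha>) \<bullet> \<theta> - \<alpha>
      = - (e \<bullet> \<theta>)"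
    unfolding TF_prompt_mat[OF X mult_mat_vec_carrier[OF X \<theta>] zero_carrier_vec] e_def
    using gd_iterate_carrier[OF X zero_carrier_vec] \<theta> \<theta>\<theta>
    by (simp add: add_scalar_prod_distrib[of _ d])
  moreover have "(e \<bullet> \<theta>)\<^sup>2 \<le> (\<bar>\<alpha>\<bar> * exp (- real T / (2 * (M / m))))\<^sup>2"
  proof -
    have "(e \<bullet> \<theta>)\<^sup>2 \<le> e \<bullet> e" using scalar_prod_cauchy_schwarz[OF e \<theta>] \<theta>\<theta> by simp
    also have "\<dots> \<le> (1 - m / M) ^ T * \<alpha>\<^sup>2"
      using gd_iterate_error_bound[OF X \<theta> zero_carrier_vec _ \<open>m \<le> M\<close> lower upper, of \<alpha> T]
        \<open>0 < m\<close> \<open>m \<le> M\<close> \<theta> \<theta>\<theta> unfolding e_def by (simp add: power2_eq_square)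
    also have "\<dots> \<le> exp (- real T * (m / M)) * \<alpha>\<^sup>2"
      using one_minus_power_le_exp[of "m / M" T] \<open>0 < m\<close> \<open>m \<le> M\<close> by (intro mult_right_mono) auto
    also have "\<dots> = (\<bar>\<alpha>\<bar> * exp (- real T / (2 * (M / m))))\<^sup>2"
      using \<open>0 < m\<close> \<open>m \<le> M\<close> by (simp add: power_mult_distrib exp_double[symmetric] field_simps)
    finally show ?thesis .
  qed
  hence "\<bar>e \<bullet> \<theta>\<bar> \<le> \<bar>\<alpha>\<bar> * exp (- real T / (2 * (M / m)))"
    using abs_le_square_iff[of "e \<bullet> \<theta>" "\<bar>\<alpha>\<bar> * exp (- real T / (2 * (M / m)))"] by simp
  ultimately show ?thesis by simp
qed

theorem mainTheorem4:
  fixes n d T :: nat and X :: "real mat" and \<theta> :: "real vec" and \<alpha> :: real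
  assumes "n > d" and "d \<ge> 1"
    and "X \<in> carrier_mat n d"
    and "invertible_mat (X\<^sup>T * X)"
    and "\<theta> \<in> carrier_vec d" and "vnorm2 \<theta> = 1"
    and "\<alpha> \<noteq> 0"
    and "T \<ge> 1"
  shows "(let y = X *\<^sub>v \<theta>;
              Z0 = four_block_mat X (mat_of_cols n [y]) (0\<^sub>m 1 d) (mat 1 1 (\<lambda>_. \<alpha>));
              Q = 1\<^sub>m (d+1);
              P = four_block_mat (1\<^sub>m d) (0\<^sub>m d 1) (0\<^sub>m 1 d) (0\<^sub>m 1 1);
              L = spec_norm (X\<^sup>T * X);
              \<kappa> = lambda_max (X\<^sup>T * X) / lambda_min (X\<^sup>T * X)
          in \<bar>TF (\<lambda>_. 1 / L) T Q P Z0 \<bullet> \<theta> - \<alpha>\<bar> \<le> \<bar>\<alpha>\<bar> * exp (- real T / (2 * \<kappa>)))"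
proof -
  note X = \<open>X \<in> carrier_mat n d\<close> and \<theta> = \<open>\<theta> \<in> carrier_vec d\<close>
  have psd: "psd_mat (X\<^sup>T * X) d" by (rule psd_mat_gram[OF X])
  hence A: "X\<^sup>T * X \<in> carrier_mat d d" and sym: "(X\<^sup>T * X)\<^sup>T = X\<^sup>T * X"
    unfolding psd_mat_def by auto
  note lower = lambda_min_rayleigh(2)[OF A sym \<open>d \<ge> 1\<close>]
    and upper = lambda_max_rayleigh(2)[OF A sym \<open>d \<ge> 1\<close>]
  have "0 < lambda_min (X\<^sup>T * X)" by (rule lambda_min_pos[OF psd assms(4) \<open>d \<ge> 1\<close>])
  moreover have "lambda_min (X\<^sup>T * X) \<le> lambda_max (X\<^sup>T * X)"
    by (rule eigenvalue_ge_rayleigh_bound[OF A lambda_max_rayleigh(1)[OF A sym \<open>d \<ge> 1\<close>] lower])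
  moreover have "four_block_mat X (mat_of_cols n [X *\<^sub>v \<theta>]) (0\<^sub>m 1 d) (mat 1 1 (\<lambda>_. \<alpha>))
      = prompt_mat X (X *\<^sub>v \<theta>) (0\<^sub>v d) \<alpha>"
    unfolding prompt_mat_def using X by (auto intro!: cong_four_block_mat eq_matI simp: mat_of_rows_index)
  moreover have "\<theta> \<bullet> \<theta> = 1"
    using \<open>vnorm2 \<theta> = 1\<close> scalar_prod_self_nonneg[of \<theta>] unfolding vnorm2_eq_sqrt_scalar_prod by simp
  ultimately show ?thesis
    using TF_prompt_mat_error_bound[OF X \<theta> _ _ _ lower upper]
    unfolding Let_def proj_mat_def[symmetric] spec_norm_psd_mat[OF psd \<open>d \<ge> 1\<close>] by simp
qed

end
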